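(* For every integer $N\ge 1$ there exists a $2$-$(4,N,2)$-tropical protocol.
   Context: Tropical arithmetic on $\mathbb{R}\cup\{\infty\}$: $x\oplus y=\min(x,y)$, $x\odot y=x+y$, with $x\oplus\infty=x$ and $x\odot\infty=\infty$; for a matrix $S$ and vector $\mathbf{x}$, $(S\odot\mathbf{x})_t=\min_j(S_{tj}+x_j)$. An $R$-$(T,N,D)$-tropical protocol consists of $R$ functions $\mathcal{S}^{(1)},\dots,\mathcal{S}^{(R)}$: $S^{(1)}=\mathcal{S}^{(1)}()$ is a fixed matrix, and for $r\ge 2$, $S^{(r)}=\mathcal{S}^{(r)}$ applied to the results $\bigl(S^{(1)};\dots;S^{(r-1)}\bigr)\odot\mathbf{x}$ of all previous rounds (vertical stacking); each $S^{(r)}$ has $N$ columns, entries in $\{0\}\cup\mathbb{N}\cup\{\infty\}$, and a number of rows that may depend on previous results, the total number of rows being at most $T$ for every $\mathbf{x}$; and the final result $\bigl(S^{(1)};\dots;S^{(R)}\bigr)\odot\mathbf{x}$ determines $\mathbf{x}$ uniquely among all $\mathbf{x}\in(\{0\}\cup\mathbb{N}\cup\{\infty\})^N$ with at most $D$ finite entries. It is within maximum delay $\ell$ if all schedule matrices use only entries in $\{0,1,\dots,\ell,\infty\}$. *)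

theory Defs
  imports Main "HOL-Library.Extended_Nat"
begin

text \<open>Values in {0} \<union> \<nat> \<union> {\<infinity>} are modelled by enat. Vectors of length N are lists of
length N, matrices are lists of rows (each row a list of length N).\<close>

definition trop_row :: "enat list \<Rightarrow> enat list \<Rightarrow> enat" where
  "trop_row r x = foldr min (map2 (+) r x) \<infinity>"

definition trop_mult :: "enat list list \<Rightarrow> enat list \<Rightarrow> enat list" where
  "trop_mult S x = map (\<lambda>r. trop_row r x) S"

text \<open>A protocol is a list of round functions; round r receives the results of
all previous rounds (vertically stacked), the first round receives the empty list,
so its schedule matrix is fixed.\<close>

definition proto_run :: "(enat list \<Rightarrow> enat list list) list \<Rightarrow> enat list \<Rightarrow> enat list" where
  "proto_run fs x = foldl (\<lambda>y f. y @ trop_mult (f y) x) [] fs"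

definition proto_sched :: "(enat list \<Rightarrow> enat list list) list \<Rightarrow> enat list \<Rightarrow> nat \<Rightarrow> enat list list" where
  "proto_sched fs x r = (fs ! r) (proto_run (take r fs) x)"

definition num_finite :: "enat list \<Rightarrow> nat" where
  "num_finite x = card {j. j < length x \<and> x ! j \<noteq> \<infinity>}"

definition tropical_protocol ::
  "nat \<Rightarrow> nat \<Rightarrow> nat \<Rightarrow> nat \<Rightarrow> (enat list \<Rightarrow> enat list list) list \<Rightarrow> bool" where
  "tropical_protocol R T N D fs \<longleftrightarrow>
     length fs = R \<and>
     (\<forall>x. length x = N \<longrightarrow>
        (\<forall>r<R. \<forall>row \<in> set (proto_sched fs x r). length row = N) \<and>
        length (proto_run fs x) \<le> T) \<and>
     (\<forall>x y. length x = N \<and> length y = N \<and> num_finite x \<le> D \<and> num_finite y \<le> D \<and>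
        proto_run fs x = proto_run fs y \<longrightarrow> x = y)"

end

theory Submission
  imports Defs
begin

text \<open>Round one measures \<open>a = min\<^sub>j (j + x\<^sub>j)\<close> and \<open>c = min\<^sub>j (N - j + x\<^sub>j)\<close>, so every
finite entry lies on or above both lines \<open>a - j\<close> and \<open>c - N + j\<close>. With at most two finite
entries, either one of them sits at the apex \<open>2j + c = a + N\<close> of this tent, or one touches the
left arm strictly left of the apex and the other the right arm strictly right of it. Round two
knows \<open>a\<close> and \<open>c\<close> and weights the indices on one side of the apex by 0 and those on the other
side by \<open>a + c + 1 + j\<close> (the apex itself by \<open>\<infinity>\<close>), once in each orientation. That weight exceeds
\<open>a + c\<close>, so a far-side entry loses against any near-side entry, and when it wins nonetheless
its index is the excess over the other value. In every configuration the two new values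
therefore determine the entries, which yields an explicit decoder of the transcript.\<close>

lemma foldr_min_eq_Min: "foldr min xs (b :: 'a :: linorder) = Min (insert b (set xs))"
  by (induction xs) (simp_all add: insert_commute min.commute)

lemma trop_row_upt:
  assumes "length x = N"
  shows "trop_row (map f [0..<N]) x = Min (insert \<infinity> ((\<lambda>j. f j + x ! j) ` {..<N}))"
proof -
  have "map2 (+) (map f [0..<N]) x = map (\<lambda>j. f j + x ! j) [0..<N]"
    using assms by (intro nth_equalityI) auto
  then show ?thesis
    unfolding trop_row_def foldr_min_eq_Min by (simp add: atLeast0LessThan)
qed

lemma trop_row_eq_infinity_iff:
  assumes "length x = N" "\<forall>j<N. f j \<noteq> \<infinity>"
  shows "trop_row (map f [0..<N]) x = \<infinity> \<longleftrightarrow> (\<forall>j<N. x ! j = \<infinity>)"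
  using assms by (force simp: trop_row_upt Min_eq_iff plus_eq_infty_iff_enat)

lemma trop_row_support:
  assumes "length x = N" "k < N" "l < N" "\<forall>j<N. j \<noteq> k \<and> j \<noteq> l \<longrightarrow> x ! j = \<infinity>"
  shows "trop_row (map f [0..<N]) x = min (f k + x ! k) (f l + x ! l)"
proof -
  have "insert \<infinity> ((\<lambda>j. f j + x ! j) ` {..<N}) = {\<infinity>, f k + x ! k, f l + x ! l}"
    using assms(2-4) by fastforce
  then show ?thesis
    using assms(1) by (simp add: trop_row_upt min.commute)
qed

definition point :: "nat \<Rightarrow> nat \<Rightarrow> nat \<Rightarrow> enat" where
  "point k u j = (if j = k then enat u else \<infinity>)"

lemma num_finite_le_2_cases:
  assumes "length x = N" "num_finite x \<le> 2"
  obtains (infinite) "\<forall>j<N. x ! j = \<infinity>"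
  | (one) k u where "k < N" "\<forall>j<N. x ! j = point k u j"
  | (two) k l u w where "k < N" "l < N" "k \<noteq> l" "\<forall>j<N. x ! j = min (point k u j) (point l w j)"
proof -
  define S where "S = {j. j < N \<and> x ! j \<noteq> \<infinity>}"
  have finite_entry: "x ! j = enat (the_enat (x ! j))" if "j \<in> S" for j
    using that by (auto simp: S_def)
  have outside: "x ! j = \<infinity>" if "j < N" "j \<notin> S" for j
    using that by (auto simp: S_def)
  have "card S \<le> 2" "S \<subseteq> {..<N}"
    using assms by (auto simp: S_def num_finite_def)
  then consider "S = {}" | k where "S = {k}" | k l where "k \<noteq> l" "S = {k, l}"
    by (metis card_0_eq card_1_singleton_iff card_2_iff finite_nat_iff_bounded le_Suc_eq
        numeral_2_eq_2 le_zero_eq)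
  then show thesis
  proof cases
    case 1
    then show thesis using infinite outside by blast
  next
    case (2 k)
    then show thesis
      using one[of k "the_enat (x ! k)"] finite_entry outside \<open>S \<subseteq> {..<N}\<close>
      by (auto simp: point_def)
  next
    case (3 k l)
    then show thesis
      using two[of k l "the_enat (x ! k)" "the_enat (x ! l)"] finite_entry outside \<open>S \<subseteq> {..<N}\<close>
      by (auto simp: point_def)
  qed
qed

definition left_probe :: "nat \<Rightarrow> nat \<Rightarrow> nat \<Rightarrow> nat \<Rightarrow> enat" where
  "left_probe N a c j =
     (if 2 * j + c < a + N then 0 else if a + N < 2 * j + c then enat (a + c + 1 + j) else \<infinity>)"

definition right_probe :: "nat \<Rightarrow> nat \<Rightarrow> nat \<Rightarrow> nat \<Rightarrow> enat" where
  "right_probe N a c j =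
     (if a + N < 2 * j + c then 0 else if 2 * j + c < a + N then enat (a + c + 1 + j) else \<infinity>)"

definition apex :: "nat \<Rightarrow> nat \<Rightarrow> nat \<Rightarrow> nat \<Rightarrow> enat" where
  "apex N a c j = (if 2 * j + c = a + N then enat (a - j) else \<infinity>)"

text \<open>An excess of one second-round value over the other beyond \<open>a + c\<close> reveals an apex entry
together with an entry on the side weighted 0 by that round; otherwise the two entries lie on the
two arms.\<close>

definition decode :: "nat \<Rightarrow> nat \<Rightarrow> nat \<Rightarrow> enat \<Rightarrow> enat \<Rightarrow> nat \<Rightarrow> enat" where
  "decode N a c r s j =
     (case (r, s) of
       (enat u, enat w) \<Rightarrow>
         if a + c < w - u then min (apex N a c j) (point (w - u - (a + c + 1)) u j)
         else if a + c < u - w then min (apex N a c j) (point (u - w - (a + c + 1)) w j)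
         else min (point (a - u) u j) (point (N + w - c) w j)
     | _ \<Rightarrow> apex N a c j)"

lemma decode_apex:
  assumes "2 * k + c = a + N" "u + k = a"
  shows "decode N a c \<infinity> \<infinity> j = point k u j"
  using assms by (auto simp: decode_def apex_def point_def)

lemma decode_apex_and_point:
  assumes "2 * k + c = a + N" "u + k = a" "2 * l + c \<noteq> a + N"
  shows "decode N a c (left_probe N a c l + enat w) (right_probe N a c l + enat w) j
           = min (point k u j) (point l w j)"
proof (cases "2 * l + c < a + N")
  case True
  then show ?thesis
    using assms by (auto simp: decode_def left_probe_def right_probe_def apex_def point_def)
next
  case False
  then show ?thesis
    using assms by (auto simp: decode_def left_probe_def right_probe_def apex_def point_def)
qed

lemma decode_arms:
  assumes "u + k = a" "2 * k + c < a + N" "w + (N - l) = c" "a + N < 2 * l + c" "l < N"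
  shows "decode N a c (enat u) (enat w) j = min (point k u j) (point l w j)"
  using assms by (auto simp: decode_def point_def)

lemma decode_two_points:
  assumes "k < N" "l < N" "k \<noteq> l"
    and a: "min (k + u) (l + w) = a" and c: "min (N - k + u) (N - l + w) = c"
  shows "decode N a c
           (min (left_probe N a c k + enat u) (left_probe N a c l + enat w))
           (min (right_probe N a c k + enat u) (right_probe N a c l + enat w)) j
         = min (point k u j) (point l w j)"
proof -
  let ?L = "left_probe N a c" and ?R = "right_probe N a c"
  consider "u + k = a" "2 * k + c = a + N" | "w + l = a" "2 * l + c = a + N"
    | "u + k = a" "2 * k + c < a + N" "w + (N - l) = c" "a + N < 2 * l + c"
    | "w + l = a" "2 * l + c < a + N" "u + (N - k) = c" "a + N < 2 * k + c"
    using a c assms(1,2) by linarith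
  then show ?thesis
  proof cases
    case 1
    then have "?L k = \<infinity>" "?R k = \<infinity>" "2 * l + c \<noteq> a + N"
      using \<open>k \<noteq> l\<close> by (auto simp: left_probe_def right_probe_def)
    with 1 show ?thesis by (simp add: decode_apex_and_point)
  next
    case 2
    then have "?L l = \<infinity>" "?R l = \<infinity>" "2 * k + c \<noteq> a + N"
      using \<open>k \<noteq> l\<close> by (auto simp: left_probe_def right_probe_def)
    with 2 show ?thesis by (simp add: decode_apex_and_point min.commute)
  next
    case 3
    then have "min (?L k + u) (?L l + w) = u" "min (?R k + u) (?R l + w) = w"
      by (auto simp: left_probe_def right_probe_def)
    with 3 show ?thesis using \<open>l < N\<close> by (simp add: decode_arms)
  next
    case 4
    then have "min (?L k + u) (?L l + w) = w" "min (?R k + u) (?R l + w) = u"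
      by (auto simp: left_probe_def right_probe_def)
    with 4 show ?thesis
      using decode_arms[of w l a c N u k j] \<open>k < N\<close> by (simp add: min.commute)
  qed
qed

lemma decode_probes:
  assumes "length x = N" "num_finite x \<le> 2" "j < N"
    and a: "trop_row (map enat [0..<N]) x = enat a"
    and c: "trop_row (map (\<lambda>j. enat (N - j)) [0..<N]) x = enat c"
  shows "decode N a c (trop_row (map (left_probe N a c) [0..<N]) x)
           (trop_row (map (right_probe N a c) [0..<N]) x) j = x ! j"
  using assms(1,2)
proof (cases rule: num_finite_le_2_cases)
  case infinite
  with a show ?thesis using trop_row_eq_infinity_iff[OF assms(1), of enat] by simp
next
  case (one k u)
  then have row: "trop_row (map f [0..<N]) x = f k + enat u" for f
    using trop_row_support[OF assms(1), of k k f] by (simp add: point_def)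
  have "u + k = a" "2 * k + c = a + N"
    using a c row \<open>k < N\<close> by auto
  then show ?thesis
    using one \<open>j < N\<close> by (simp add: row left_probe_def right_probe_def decode_apex)
next
  case (two k l u w)
  then have row: "trop_row (map f [0..<N]) x = min (f k + enat u) (f l + enat w)" for f
    using trop_row_support[OF assms(1), of k l f] by (simp add: point_def)
  have "min (k + u) (l + w) = a" "min (N - k + u) (N - l + w) = c"
    using a c row by (auto simp: min_def split: if_splits)
  then show ?thesis
    using two \<open>j < N\<close> by (simp add: row decode_two_points)
qed

definition first_schedule :: "nat \<Rightarrow> enat list list" where
  "first_schedule N = [map enat [0..<N], map (\<lambda>j. enat (N - j)) [0..<N]]"

definition second_schedule :: "nat \<Rightarrow> nat \<Rightarrow> nat \<Rightarrow> enat list list" where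
  "second_schedule N a c = [map (left_probe N a c) [0..<N], map (right_probe N a c) [0..<N]]"

definition two_round_protocol :: "nat \<Rightarrow> (enat list \<Rightarrow> enat list list) list" where
  "two_round_protocol N =
     [\<lambda>_. first_schedule N, \<lambda>m. second_schedule N (the_enat (m ! 0)) (the_enat (m ! 1))]"

definition decode_transcript :: "nat \<Rightarrow> enat list \<Rightarrow> nat \<Rightarrow> enat" where
  "decode_transcript N m j =
     (if m ! 0 = \<infinity> then \<infinity> else decode N (the_enat (m ! 0)) (the_enat (m ! 1)) (m ! 2) (m ! 3) j)"

lemma proto_run_two_round_protocol:
  "proto_run (two_round_protocol N) x = (let m = trop_mult (first_schedule N) x in
     m @ trop_mult (second_schedule N (the_enat (m ! 0)) (the_enat (m ! 1))) x)"
  by (simp add: proto_run_def two_round_protocol_def Let_def)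

lemma decode_transcript_two_round_protocol:
  assumes "length x = N" "num_finite x \<le> 2" "j < N"
  shows "decode_transcript N (proto_run (two_round_protocol N) x) j = x ! j"
proof -
  let ?a = "trop_row (map enat [0..<N]) x" and ?c = "trop_row (map (\<lambda>j. enat (N - j)) [0..<N]) x"
  have finite_iff: "?a = \<infinity> \<longleftrightarrow> (\<forall>j<N. x ! j = \<infinity>)" "?c = \<infinity> \<longleftrightarrow> (\<forall>j<N. x ! j = \<infinity>)"
    using assms(1) by (simp_all add: trop_row_eq_infinity_iff)
  show ?thesis
  proof (cases ?a)
    case (enat a)
    then obtain c where "?c = enat c"
      using finite_iff by (cases ?c) auto
    with enat assms show ?thesis
      by (simp add: proto_run_two_round_protocol decode_transcript_def first_schedule_def
          second_schedule_def trop_mult_def decode_probes)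
  next
    case infinity
    with finite_iff assms show ?thesis
      by (simp add: proto_run_two_round_protocol decode_transcript_def first_schedule_def
          trop_mult_def)
  qed
qed

lemma two_round_protocol_injective:
  assumes "length x = N" "length y = N" "num_finite x \<le> 2" "num_finite y \<le> 2"
    and "proto_run (two_round_protocol N) x = proto_run (two_round_protocol N) y"
  shows "x = y"
proof (rule nth_equalityI)
  fix j assume "j < length x"
  then show "x ! j = y ! j"
    using assms decode_transcript_two_round_protocol by metis
qed (use assms in simp)

theorem mainTheorem16:
  fixes N :: nat
  assumes "N \<ge> 1"
  shows "\<exists>fs. tropical_protocol 2 4 N 2 fs"
proof
  have "length row = N" if "row \<in> set (proto_sched (two_round_protocol N) x r)" "r < 2" for x r row
    using that by (auto simp: less_2_cases_iff proto_sched_def two_round_protocol_def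
        first_schedule_def second_schedule_def)
  moreover have "length (proto_run (two_round_protocol N) x) \<le> 4" for x
    by (simp add: proto_run_two_round_protocol first_schedule_def second_schedule_def trop_mult_def)
  ultimately show "tropical_protocol 2 4 N 2 (two_round_protocol N)"
    unfolding tropical_protocol_def
    using two_round_protocol_injective by (auto simp: two_round_protocol_def)
qed

end
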